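(* Let $\delta_\ell=94/194$. Let $H$ be a $3$-regular graph on $n>4$ nodes every independent set of which has at most $\delta_\ell n$ nodes, and let $G$ be the complement of $H$ (an $(n-4)$-regular graph). Then $$\mathsf{OPT}(G)\le\frac{4\delta_\ell-1}{n-4},$$ where the maximum is over clusterings with any number of clusters.
   Context: For a finite simple undirected graph $G=(V,E)$ with $m=|E|\ge1$ edges, degrees $d_v$, and $a_{u,v}=1$ if $\{u,v\}\in E$ and $0$ otherwise: for $C\subseteq V$, $\mathsf M(C)=\frac{1}{2m}\sum_{u\in C}\sum_{v\in C}\big(a_{u,v}-\frac{d_ud_v}{2m}\big)$ (ordered pairs, including $u=v$). A clustering is a partition $\mathcal S$ of $V$ into nonempty clusters, with $\mathsf M(\mathcal S)=\sum_{C\in\mathcal S}\mathsf M(C)$; $\mathsf{OPT}(G)$ is the maximum of $\mathsf M(\mathcal S)$ over all clusterings. *)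

theory Defs
  imports Complex_Main "HOL-Library.Disjoint_Sets"
begin

definition simple_graph :: "'a set \<Rightarrow> ('a \<Rightarrow> 'a \<Rightarrow> bool) \<Rightarrow> bool" where
  "simple_graph V E \<longleftrightarrow> finite V \<and> (\<forall>u v. E u v \<longrightarrow> u \<in> V \<and> v \<in> V)
     \<and> (\<forall>u v. E u v \<longrightarrow> E v u) \<and> (\<forall>u. \<not> E u u)"

definition degree :: "'a set \<Rightarrow> ('a \<Rightarrow> 'a \<Rightarrow> bool) \<Rightarrow> 'a \<Rightarrow> nat" where
  "degree V E v = card {u \<in> V. E v u}"

definition regular :: "'a set \<Rightarrow> ('a \<Rightarrow> 'a \<Rightarrow> bool) \<Rightarrow> nat \<Rightarrow> bool" where
  "regular V E k \<longleftrightarrow> (\<forall>v \<in> V. degree V E v = k)"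

definition num_edges :: "'a set \<Rightarrow> ('a \<Rightarrow> 'a \<Rightarrow> bool) \<Rightarrow> nat" where
  "num_edges V E = card {{u, v} | u v. u \<in> V \<and> v \<in> V \<and> E u v}"

definition independent_set :: "'a set \<Rightarrow> ('a \<Rightarrow> 'a \<Rightarrow> bool) \<Rightarrow> 'a set \<Rightarrow> bool" where
  "independent_set V E S \<longleftrightarrow> S \<subseteq> V \<and> (\<forall>u \<in> S. \<forall>v \<in> S. \<not> E u v)"

definition complement_graph :: "'a set \<Rightarrow> ('a \<Rightarrow> 'a \<Rightarrow> bool) \<Rightarrow> 'a \<Rightarrow> 'a \<Rightarrow> bool" where
  "complement_graph V E u v \<longleftrightarrow> u \<in> V \<and> v \<in> V \<and> u \<noteq> v \<and> \<not> E u v"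

definition adj :: "('a \<Rightarrow> 'a \<Rightarrow> bool) \<Rightarrow> 'a \<Rightarrow> 'a \<Rightarrow> real" where
  "adj E u v = (if E u v then 1 else 0)"

text \<open>Modularity of a cluster C: sum over ordered pairs (including u = v).\<close>
definition cluster_modularity :: "'a set \<Rightarrow> ('a \<Rightarrow> 'a \<Rightarrow> bool) \<Rightarrow> 'a set \<Rightarrow> real" where
  "cluster_modularity V E C =
     (let m = real (num_edges V E) in
      (1 / (2 * m)) * (\<Sum>u\<in>C. \<Sum>v\<in>C. adj E u v
         - real (degree V E u) * real (degree V E v) / (2 * m)))"

definition modularity :: "'a set \<Rightarrow> ('a \<Rightarrow> 'a \<Rightarrow> bool) \<Rightarrow> 'a set set \<Rightarrow> real" where
  "modularity V E P = (\<Sum>C\<in>P. cluster_modularity V E C)"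

definition OPT :: "'a set \<Rightarrow> ('a \<Rightarrow> 'a \<Rightarrow> bool) \<Rightarrow> real" where
  "OPT V E = Max {modularity V E P | P. partition_on V P}"

end

theory Submission
  imports Defs
begin

(* G is (N - 4)-regular with 2m = N (N - 4), so a cluster C with |C| = k containing E ordered
   pairs of adjacent H-vertices has modularity (4 k^2 / N - k - E) / (N (N - 4)).  The number
   E is bounded below in three ways: by 2 (k - delta N), because C keeps an independent set of
   size k - E/2 (greedy deletion); by 6 k - 3 N + E', where E' counts the H-edges inside V - C,
   by 3-regularity; and E' >= 2 (N - k - delta N) again by the independence bound.  An
   elementary case analysis turns these into 4 k^2 <= 4 delta N k + N E, i.e. every cluster
   contributes at most (4 delta - 1) / (N - 4) * k / N.  Summing over the clusters of any
   partition of V gives the bound on OPT. *)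

(* Twice the number of edges of H inside C: the adjacency matrix summed over ordered pairs of C. *)
definition internal_adj :: "('a \<Rightarrow> 'a \<Rightarrow> bool) \<Rightarrow> 'a set \<Rightarrow> real" where
  "internal_adj H C = (\<Sum>u\<in>C. \<Sum>v\<in>C. adj H u v)"

lemma internal_adj_nonneg: "0 \<le> internal_adj H C"
  unfolding internal_adj_def by (intro sum_nonneg) (simp add: adj_def)

lemma sum_adj_eq_degree:
  assumes "finite V"
  shows "(\<Sum>v\<in>V. adj H u v) = real (degree V H u)"
  using assms by (simp add: adj_def degree_def sum.If_cases Int_def conj_commute)

lemma internal_adj_remove:
  assumes "finite C" and "u \<in> C"
  shows "internal_adj H C
           = internal_adj H (C - {u}) + (\<Sum>x\<in>C - {u}. adj H x u) + (\<Sum>y\<in>C. adj H u y)"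
proof -
  have "internal_adj H C = (\<Sum>y\<in>C. adj H u y) + (\<Sum>x\<in>C - {u}. \<Sum>y\<in>C. adj H x y)"
    unfolding internal_adj_def using sum.remove[OF assms] by simp
  also have "(\<Sum>x\<in>C - {u}. \<Sum>y\<in>C. adj H x y) = (\<Sum>x\<in>C - {u}. adj H x u + (\<Sum>y\<in>C - {u}. adj H x y))"
    by (intro sum.cong refl) (simp add: sum.remove[OF assms])
  also have "\<dots> = (\<Sum>x\<in>C - {u}. adj H x u) + internal_adj H (C - {u})"
    by (simp add: sum.distrib internal_adj_def)
  finally show ?thesis by simp
qed

(* Greedy bound: every C contains an independent set of size at least |C| minus the number of
  edges inside C (delete one endpoint of an inner edge until none is left). *)
lemma large_independent_subset:
  assumes sg: "simple_graph V H" and CV: "C \<subseteq> V"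
  shows "\<exists>S\<subseteq>C. independent_set V H S \<and> real (card C) - internal_adj H C / 2 \<le> real (card S)"
  using CV
proof (induction C rule: measure_induct_rule[of card])
  case (less C)
  have finC: "finite C" using less.prems sg finite_subset by (auto simp: simple_graph_def)
  show ?case
  proof (cases "\<forall>u\<in>C. \<forall>v\<in>C. \<not> H u v")
    case True
    then have "independent_set V H C" using less.prems by (simp add: independent_set_def)
    then show ?thesis using internal_adj_nonneg[of H C] by (intro exI[of _ C]) auto
  next
    case False
    then obtain u v where u: "u \<in> C" and v: "v \<in> C" and huv: "H u v" by blast
    have "u \<noteq> v" and hvu: "H v u" using huv sg by (auto simp: simple_graph_def)
    then have v': "v \<in> C - {u}" using v by simp
    have card_less: "card (C - {u}) < card C" using finC u by (rule card_Diff1_less)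
    obtain S where S: "S \<subseteq> C - {u}" "independent_set V H S"
        "real (card (C - {u})) - internal_adj H (C - {u}) / 2 \<le> real (card S)"
      using less.IH[OF card_less] less.prems by blast
    have "adj H v u \<le> (\<Sum>x\<in>C - {u}. adj H x u)"
      by (rule member_le_sum[OF v']) (use finC in \<open>simp_all add: adj_def\<close>)
    moreover have "adj H u v \<le> (\<Sum>y\<in>C. adj H u y)"
      by (rule member_le_sum[OF v]) (use finC in \<open>simp_all add: adj_def\<close>)
    moreover have "adj H v u = 1" "adj H u v = 1" using huv hvu by (auto simp: adj_def)
    ultimately have "internal_adj H (C - {u}) + 2 \<le> internal_adj H C"
      using internal_adj_remove[OF finC u, of H] by linarith
    moreover have "real (card C) = real (card (C - {u})) + 1"
      using finC u by (metis card_Suc_Diff1 add.commute of_nat_Suc)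
    ultimately show ?thesis using S by auto
  qed
qed

(* In a d-regular graph, counting the degrees of C and of its complement relates the inner edges
  of C and of V - C: both sides of the cut between them are equal. *)
lemma internal_adj_regular:
  assumes sg: "simple_graph V H" and reg: "regular V H d" and CV: "C \<subseteq> V"
  shows "internal_adj H C = 2 * d * real (card C) - d * real (card V) + internal_adj H (V - C)"
proof -
  have finV: "finite V" using sg by (simp add: simple_graph_def)
  define cut where "cut A = (\<Sum>u\<in>A. \<Sum>v\<in>V - A. adj H u v)" for A
  have row_split: "internal_adj H A + cut A = d * real (card A)" if AV: "A \<subseteq> V" for A
  proof -
    have "internal_adj H A + cut A = (\<Sum>u\<in>A. \<Sum>v\<in>V. adj H u v)"
      unfolding internal_adj_def cut_def sum.distrib[symmetric]
      by (intro sum.cong refl) (metis AV finV sum.subset_diff add.commute)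
    also have "\<dots> = (\<Sum>u\<in>A. real d)"
      using AV reg finV by (intro sum.cong refl) (auto simp: sum_adj_eq_degree regular_def)
    finally show ?thesis by simp
  qed
  have adj_sym: "adj H u v = adj H v u" for u v
    using sg by (auto simp: adj_def simple_graph_def)
  have "cut C = (\<Sum>v\<in>V - C. \<Sum>u\<in>C. adj H u v)" unfolding cut_def by (rule sum.swap)
  also have "\<dots> = cut (V - C)"
    using CV by (simp add: cut_def double_diff adj_sym)
  finally have cut_sym: "cut C = cut (V - C)" .
  have "card V = card C + card (V - C)"
    using CV finV by (metis card_Diff_subset card_mono finite_subset le_add_diff_inverse)
  then have "d * real (card V) = d * real (card C) + d * real (card (V - C))"
    by (simp add: distrib_left)
  then show ?thesis using row_split[OF CV] row_split[of "V - C"] cut_sym by simp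
qed

lemma simple_graph_complement:
  assumes "simple_graph V H"
  shows "simple_graph V (complement_graph V H)"
  using assms by (auto simp: simple_graph_def complement_graph_def)

(* In the complement a vertex misses itself and its former neighbours. *)
lemma degree_complement:
  assumes sg: "simple_graph V H" and v: "v \<in> V"
  shows "degree V (complement_graph V H) v = card V - Suc (degree V H v)"
proof -
  have finV: "finite V" using sg by (simp add: simple_graph_def)
  define N where "N = {u\<in>V. H v u}"
  have "v \<notin> N" using sg by (simp add: N_def simple_graph_def)
  then have "card (insert v N) = Suc (degree V H v)"
    using finV by (simp add: N_def degree_def)
  moreover have "{u\<in>V. complement_graph V H v u} = V - insert v N"
    using v by (auto simp: complement_graph_def N_def)
  moreover have "insert v N \<subseteq> V" using v by (auto simp: N_def)
  ultimately show ?thesis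
    unfolding degree_def using finV by (metis card_Diff_subset finite_subset)
qed

lemma handshake:
  assumes sg: "simple_graph V G"
  shows "2 * num_edges V G = (\<Sum>v\<in>V. degree V G v)"
proof -
  have finV: "finite V" using sg by (simp add: simple_graph_def)
  define Ed where "Ed = {{u, v} | u v. u \<in> V \<and> v \<in> V \<and> G u v}"
  define Pr where "Pr = (SIGMA u:V. {v\<in>V. G u v})"
  define fibre where "fibre e = {p\<in>Pr. {fst p, snd p} = e}" for e
  have finPr: "finite Pr" unfolding Pr_def using finV by simp
  have finEd: "finite Ed"
    using finite_subset[of Ed "Pow V"] finV by (auto simp: Ed_def)
  have fibre_two: "card (fibre e) = 2" if "e \<in> Ed" for e
  proof -
    obtain u v where e: "e = {u, v}" "u \<in> V" "v \<in> V" "G u v" using \<open>e \<in> Ed\<close> by (auto simp: Ed_def)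
    have "u \<noteq> v" "G v u" using e(4) sg by (auto simp: simple_graph_def)
    then have "fibre e = {(u, v), (v, u)}" using e by (auto simp: fibre_def Pr_def doubleton_eq_iff)
    then show ?thesis using \<open>u \<noteq> v\<close> by simp
  qed
  have "Pr = (\<Union>e\<in>Ed. fibre e)"
    by (auto simp: Pr_def fibre_def Ed_def) blast
  then have "card Pr = (\<Sum>e\<in>Ed. card (fibre e))"
    by (simp only:) (rule card_UN_disjoint[OF finEd]; auto simp: fibre_def intro: finite_subset[OF _ finPr])
  also have "\<dots> = 2 * card Ed" using fibre_two by simp
  finally show ?thesis
    unfolding num_edges_def Ed_def[symmetric] using finV by (simp add: Pr_def degree_def)
qed

(* Inside C the complement has all ordered pairs of distinct vertices that are not edges of H. *)
lemma internal_adj_complement: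
  assumes sg: "simple_graph V H" and CV: "C \<subseteq> V"
  shows "internal_adj (complement_graph V H) C = real (card C) ^ 2 - real (card C) - internal_adj H C"
proof -
  have finC: "finite C" using CV sg finite_subset by (auto simp: simple_graph_def)
  have row: "(\<Sum>v\<in>C. adj (complement_graph V H) u v) = real (card C) - (\<Sum>v\<in>C. adj H u v) - 1"
    if u: "u \<in> C" for u
  proof -
    have "(\<Sum>v\<in>C. adj (complement_graph V H) u v) = (\<Sum>v\<in>C. 1 - adj H u v - (if u = v then 1 else 0))"
      using CV u sg by (intro sum.cong refl) (auto simp: adj_def complement_graph_def simple_graph_def)
    also have "\<dots> = real (card C) - (\<Sum>v\<in>C. adj H u v) - 1"
      using u finC by (simp add: sum_subtractf)
    finally show ?thesis .
  qed
  show ?thesis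
    unfolding internal_adj_def
    by (simp add: row sum_subtractf power2_eq_square cong: sum.cong)
qed

(* Closed form of the modularity of a cluster in the complement of a d-regular graph:
  all degrees equal N - d - 1 and 2m = N (N - d - 1). *)
lemma cluster_modularity_complement:
  assumes sg: "simple_graph V H" and reg: "regular V H d" and big: "d + 1 < card V"
    and CV: "C \<subseteq> V"
  shows "cluster_modularity V (complement_graph V H) C
           = ((real d + 1) * real (card C) ^ 2 / real (card V) - real (card C) - internal_adj H C)
             / (real (card V) * (real (card V) - real d - 1))"
proof -
  define G where "G = complement_graph V H"
  define N where "N = real (card V)"
  define D where "D = N - real d - 1"
  define k where "k = real (card C)"
  have N: "N > 0" and D: "D > 0" using big by (simp_all add: N_def D_def)
  have degG: "real (degree V G u) = D" if "u \<in> V" for u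
    using degree_complement[OF sg that] reg that big
    by (simp add: G_def D_def N_def regular_def)
  have "2 * real (num_edges V G) = (\<Sum>v\<in>V. real (degree V G v))"
    using handshake[OF simple_graph_complement[OF sg]] unfolding G_def
    by (metis of_nat_mult of_nat_numeral of_nat_sum)
  also have "\<dots> = N * D" using degG by (simp add: N_def)
  finally have two_m: "2 * real (num_edges V G) = N * D" .
  have "cluster_modularity V G C = (1 / (N * D)) * (\<Sum>u\<in>C. \<Sum>v\<in>C. adj G u v - D * D / (N * D))"
    unfolding cluster_modularity_def Let_def two_m
    by (intro arg_cong[where f="\<lambda>x. 1 / (N * D) * x"] sum.cong refl) (simp add: degG subsetD[OF CV])
  also have "\<dots> = (internal_adj G C - k^2 * D / N) / (N * D)"
    using N D by (simp add: internal_adj_def sum_subtractf k_def power2_eq_square)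
  also have "internal_adj G C - k^2 * D / N = (real d + 1) * k^2 / N - k - internal_adj H C"
    unfolding G_def internal_adj_complement[OF sg CV] using N by (simp add: k_def D_def field_simps)
  finally show ?thesis by (simp add: G_def N_def D_def k_def)
qed

(* The arithmetic core: the three lower bounds on E available for a cluster of size k
  (the independence bound for C, the same bound for V - C transported by 3-regularity, and
  3-regularity alone) give 4 k^2 <= 4 delta N k + N E whenever delta >= 1/4.  The proof splits
  k/N at delta, 1/2 and 1/2 + delta; on each piece one bound suffices. *)
lemma square_bound_from_edge_bounds:
  fixes k N E \<delta> :: real
  assumes "1/4 \<le> \<delta>" and "0 \<le> k" and "k \<le> N" and "0 \<le> E"
    and indep: "2 * (k - \<delta> * N) \<le> E"
    and indep_compl: "4 * k - N - 2 * \<delta> * N \<le> E"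
    and regular: "6 * k - 3 * N \<le> E"
  shows "4 * k^2 \<le> 4 * \<delta> * N * k + N * E"
proof -
  have N: "0 \<le> N" using assms by linarith
  consider "k \<le> \<delta> * N" | "\<delta> * N \<le> k" "k \<le> N / 2" | "N / 2 \<le> k" "k \<le> (1/2 + \<delta>) * N"
    | "(1/2 + \<delta>) * N \<le> k" by linarith
  then show ?thesis
  proof cases
    case 1
    have "0 \<le> k * (\<delta> * N - k)" using 1 assms by simp
    moreover have "0 \<le> N * E" using N assms by simp
    ultimately show ?thesis by (simp add: algebra_simps power2_eq_square)
  next
    case 2
    have "0 \<le> (k - \<delta> * N) * (N - 2 * k)" using 2 by simp
    moreover have "N * (2 * (k - \<delta> * N)) \<le> N * E" using indep N by (rule mult_left_mono)
    ultimately show ?thesis by (simp add: algebra_simps power2_eq_square)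
  next
    case 3
    have "0 \<le> (2 * k - N) * (N + 2 * \<delta> * N - 2 * k)"
      using 3 by (intro mult_nonneg_nonneg) (simp_all add: algebra_simps)
    moreover have "N * (4 * k - N - 2 * \<delta> * N) \<le> N * E" using indep_compl N by (rule mult_left_mono)
    ultimately show ?thesis by (simp add: algebra_simps power2_eq_square)
  next
    case 4
    have "0 \<le> (N - k) * (4 * k - (4 * \<delta> + 2) * N)"
      using 4 assms by (intro mult_nonneg_nonneg) (simp_all add: algebra_simps)
    moreover have "0 \<le> (4 * \<delta> - 1) * N^2" using assms by simp
    moreover have "N * (6 * k - 3 * N) \<le> N * E" using regular N by (rule mult_left_mono)
    ultimately show ?thesis by (simp add: algebra_simps power2_eq_square)
  qed
qed

lemma internal_adj_square_bound:
  assumes sg: "simple_graph V H" and reg: "regular V H 3" and \<delta>: "1/4 \<le> \<delta>"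
    and ind: "\<forall>S. independent_set V H S \<longrightarrow> real (card S) \<le> \<delta> * real (card V)"
    and CV: "C \<subseteq> V"
  shows "4 * real (card C) ^ 2
           \<le> 4 * \<delta> * real (card V) * real (card C) + real (card V) * internal_adj H C"
proof -
  have finV: "finite V" using sg by (simp add: simple_graph_def)
  have indep_bound: "2 * (real (card A) - \<delta> * real (card V)) \<le> internal_adj H A"
    if "A \<subseteq> V" for A
    using large_independent_subset[OF sg that] ind by force
  have "card (V - C) = card V - card C"
    using CV finV by (meson card_Diff_subset finite_subset)
  then have card_rest: "real (card (V - C)) = real (card V) - real (card C)"
    using CV finV by (simp add: card_mono)
  have split: "internal_adj H C = 6 * real (card C) - 3 * real (card V) + internal_adj H (V - C)"
    using internal_adj_regular[OF sg reg CV] by simp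
  show ?thesis
  proof (rule square_bound_from_edge_bounds[OF \<delta>])
    show "2 * (real (card C) - \<delta> * real (card V)) \<le> internal_adj H C"
      using indep_bound[OF CV] .
    show "4 * real (card C) - real (card V) - 2 * \<delta> * real (card V) \<le> internal_adj H C"
      using indep_bound[of "V - C"] card_rest split by auto
    show "6 * real (card C) - 3 * real (card V) \<le> internal_adj H C"
      using split internal_adj_nonneg[of H "V - C"] by linarith
  qed (use CV finV in \<open>simp_all add: card_mono internal_adj_nonneg\<close>)
qed

lemma cluster_modularity_bound:
  assumes sg: "simple_graph V H" and reg: "regular V H 3" and big: "card V > 4"
    and \<delta>: "1/4 \<le> \<delta>"
    and ind: "\<forall>S. independent_set V H S \<longrightarrow> real (card S) \<le> \<delta> * real (card V)"
    and CV: "C \<subseteq> V"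
  shows "cluster_modularity V (complement_graph V H) C
           \<le> (4 * \<delta> - 1) / (real (card V) - 4) * real (card C) / real (card V)"
proof -
  define N where "N = real (card V)"
  define k where "k = real (card C)"
  define E where "E = internal_adj H C"
  have N: "N > 4" using big by (simp add: N_def)
  have "4 * k^2 \<le> 4 * \<delta> * N * k + N * E"
    using internal_adj_square_bound[OF sg reg \<delta> ind CV] by (simp add: N_def k_def E_def)
  then have "4 * k^2 / N \<le> (4 * \<delta> * N * k + N * E) / N"
    using N by (intro divide_right_mono) auto
  also have "\<dots> = 4 * \<delta> * k + E"
    using N by (simp add: field_simps)
  finally have "4 * k^2 / N - k - E \<le> (4 * \<delta> - 1) * k"
    by (simp add: left_diff_distrib)
  then have "(4 * k^2 / N - k - E) / (N * (N - 4)) \<le> ((4 * \<delta> - 1) * k) / (N * (N - 4))"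
    using N by (intro divide_right_mono) auto
  also have "\<dots> = (4 * \<delta> - 1) / (N - 4) * k / N"
    by (simp add: field_simps)
  finally show ?thesis
    using cluster_modularity_complement[OF sg reg _ CV] big by (simp add: N_def k_def E_def)
qed

lemma OPT_le_of_cluster_bound:
  assumes finV: "finite V" and Vne: "V \<noteq> {}"
    and bound: "\<And>C. C \<subseteq> V \<Longrightarrow> cluster_modularity V G C \<le> c * real (card C) / real (card V)"
  shows "OPT V G \<le> c"
proof -
  have partition_le: "modularity V G P \<le> c" if P: "partition_on V P" for P
  proof -
    have PV: "C \<subseteq> V" if "C \<in> P" for C using P that by (auto simp: partition_on_def)
    have card_sum: "(\<Sum>C\<in>P. card C) = card V"
    proof -
      have "card (\<Union>P) = (\<Sum>C\<in>P. card C)"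
        using P PV finV by (intro card_Union_disjoint) (auto simp: partition_on_def intro: finite_subset)
      then show ?thesis using P by (simp add: partition_on_def)
    qed
    have "modularity V G P \<le> (\<Sum>C\<in>P. c * real (card C) / real (card V))"
      unfolding modularity_def by (intro sum_mono bound PV)
    also have "\<dots> = c * real (\<Sum>C\<in>P. card C) / real (card V)"
      by (simp add: sum_divide_distrib[symmetric] sum_distrib_left)
    also have "\<dots> = c" using card_sum finV Vne by simp
    finally show ?thesis .
  qed
  have "{P. partition_on V P} \<subseteq> Pow (Pow V)" by (auto simp: partition_on_def)
  then have "finite {P. partition_on V P}" using finV by (simp add: finite_subset)
  then have "finite {modularity V G P | P. partition_on V P}"
    by (simp add: setcompr_eq_image)
  moreover have "{modularity V G P | P. partition_on V P} \<noteq> {}"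
    using Vne by (auto simp: partition_on_def disjoint_def)
  ultimately show ?thesis
    unfolding OPT_def using partition_le by auto
qed

theorem mainTheorem9:
  fixes V :: "'a set" and H :: "'a \<Rightarrow> 'a \<Rightarrow> bool"
  assumes "simple_graph V H"
    and "regular V H 3"
    and "card V > 4"
    and "\<forall>S. independent_set V H S \<longrightarrow> real (card S) \<le> (94 / 194) * real (card V)"
  shows "OPT V (complement_graph V H) \<le> (4 * (94 / 194) - 1) / (real (card V) - 4)"
proof (rule OPT_le_of_cluster_bound)
  show "finite V" using assms(1) by (simp add: simple_graph_def)
  show "V \<noteq> {}" using assms(3) by auto
  show "cluster_modularity V (complement_graph V H) C
          \<le> (4 * (94 / 194) - 1) / (real (card V) - 4) * real (card C) / real (card V)"
    if "C \<subseteq> V" for C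
    using cluster_modularity_bound[OF assms(1-3) _ assms(4) that] by simp
qed

end
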